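(* Let $m>1$ and $a\in\mathbb{Z}_m$ with $2a^2-2a+1\equiv0\pmod m$. Then the quadratical quasigroup $(\mathbb{Z}_m,\cdot)$, $x\cdot y=ax+(1-a)y$, is not isomorphic to its dual $(\mathbb{Z}_m,\circ)$, $x\circ y=(1-a)x+ay$; i.e. no quadratical quasigroup induced by $\mathbb{Z}_m$ is self-dual.
   Context: The dual of a groupoid $(Q,\cdot)$ is $(Q,* )$ with $x*y=y\cdot x$; a groupoid is self-dual if it is isomorphic to its dual. Every quadratical quasigroup induced by the additive group $\mathbb{Z}_m$ has the form $x\cdot y=ax+(1-a)y$ with $2a^2-2a+1\equiv0\pmod m$. *)

theory Defs
  imports Main
begin

text \<open>Z_m is represented by the carrier {0..<m} of integers with arithmetic mod m.\<close>

definition zm :: "int \<Rightarrow> int set" where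
  "zm m = {0..<m}"

definition qop :: "int \<Rightarrow> int \<Rightarrow> int \<Rightarrow> int \<Rightarrow> int" where
  "qop m a x y = (a * x + (1 - a) * y) mod m"

definition dual_op :: "('a \<Rightarrow> 'a \<Rightarrow> 'a) \<Rightarrow> 'a \<Rightarrow> 'a \<Rightarrow> 'a" where
  "dual_op op x y = op y x"

definition groupoid_iso :: "'a set \<Rightarrow> ('a \<Rightarrow> 'a \<Rightarrow> 'a) \<Rightarrow> 'b set \<Rightarrow> ('b \<Rightarrow> 'b \<Rightarrow> 'b) \<Rightarrow> ('a \<Rightarrow> 'b) \<Rightarrow> bool" where
  "groupoid_iso Q op1 Q' op2 f \<longleftrightarrow>
     bij_betw f Q Q' \<and> (\<forall>x\<in>Q. \<forall>y\<in>Q. f (op1 x y) = op2 (f x) (f y))"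

definition self_dual :: "'a set \<Rightarrow> ('a \<Rightarrow> 'a \<Rightarrow> 'a) \<Rightarrow> bool" where
  "self_dual Q op \<longleftrightarrow> (\<exists>f. groupoid_iso Q op Q (dual_op op) f)"

end

theory Submission
  imports Defs "HOL-Number_Theory.Cong"
begin

text \<open>An isomorphism from \<open>(\<int>\<^sub>m, \<cdot>)\<close> onto its dual is an anti-homomorphism of the affine
  operation \<open>x \<cdot> y = a x + (1 - a) y\<close>. After lifting it to \<open>\<int>\<close> and translating it so that it
  fixes \<open>0\<close>, it becomes additive modulo \<open>m\<close>, because \<open>a\<close> and \<open>1 - a\<close> are units with inverses
  \<open>2 - 2a\<close> and \<open>2a\<close>; hence it is multiplication by its value \<open>g\<close> at \<open>1\<close>. Evaluating at \<open>a\<close> in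
  two ways gives \<open>a g \<equiv> (1 - a) g\<close>, i.e. \<open>(2a - 1) g \<equiv> 0\<close>, and \<open>(2a - 1)\<^sup>2 \<equiv> -1\<close>, so \<open>g \<equiv> 0\<close>:
  the map is constant, which contradicts injectivity since \<open>m > 1\<close>.\<close>

lemma qop_mod_args: "qop m a (x mod m) (y mod m) = (a * x + (1 - a) * y) mod m"
  unfolding qop_def by (metis mod_add_cong mod_mult_right_eq)

locale anti_affine =
  fixes m a :: int and G :: "int \<Rightarrow> int"
  assumes modulus_pos: "m > 0"
    and quadratical: "[2 * a^2 - 2 * a + 1 = 0] (mod m)"
    and periodic: "[x = y] (mod m) \<Longrightarrow> G x = G y"
    and zero: "G 0 = 0"
    and anti_hom: "[G (a * x + (1 - a) * y) = (1 - a) * G x + a * G y] (mod m)"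
begin

lemma inverse_a: "[a * (2 - 2 * a) = 1] (mod m)"
proof -
  have "[1 - (2 * a^2 - 2 * a + 1) = 1 - 0] (mod m)"
    using quadratical by (intro cong_diff cong_refl)
  then show ?thesis by (simp add: algebra_simps power2_eq_square)
qed

lemma inverse_one_minus_a: "[(1 - a) * (2 * a) = 1] (mod m)"
  using inverse_a by (simp add: algebra_simps)

lemma scale_a: "[G (a * x) = (1 - a) * G x] (mod m)"
  using anti_hom[of x 0] zero by simp

lemma scale_1a: "[G ((1 - a) * y) = a * G y] (mod m)"
  using anti_hom[of 0 y] zero by simp

lemma additive: "[G (u + v) = G u + G v] (mod m)"
proof -
  define u' where "u' = (2 - 2 * a) * u"
  define v' where "v' = 2 * a * v"
  have "[a * u' = u] (mod m)"
    using cong_scalar_right[OF inverse_a, of u] by (simp add: u'_def mult.assoc)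
  then have Gu: "G u = G (a * u')"
    by (simp add: periodic cong_sym)
  have "[(1 - a) * v' = v] (mod m)"
    using cong_scalar_right[OF inverse_one_minus_a, of v] by (simp add: v'_def mult.assoc)
  then have Gv: "G v = G ((1 - a) * v')"
    by (simp add: periodic cong_sym)
  have "[a * u' + (1 - a) * v' = u + v] (mod m)"
    using \<open>[a * u' = u] (mod m)\<close> \<open>[(1 - a) * v' = v] (mod m)\<close> by (rule cong_add)
  then have "G (u + v) = G (a * u' + (1 - a) * v')"
    by (simp add: periodic cong_sym)
  also have "[G (a * u' + (1 - a) * v') = (1 - a) * G u' + a * G v'] (mod m)"
    by (rule anti_hom)
  also have "[(1 - a) * G u' + a * G v' = G (a * u') + G ((1 - a) * v')] (mod m)"
    using scale_a scale_1a by (intro cong_add) (simp_all add: cong_sym)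
  finally show ?thesis
    using Gu Gv by simp
qed

lemma linear_nat: "[G (int n) = int n * G 1] (mod m)"
proof (induction n)
  case 0
  then show ?case by (simp add: zero)
next
  case (Suc n)
  have "[G (int n + 1) = G (int n) + G 1] (mod m)"
    by (rule additive)
  also have "[G (int n) + G 1 = int n * G 1 + G 1] (mod m)"
    using Suc.IH by (intro cong_add cong_refl)
  finally show ?case
    by (simp add: algebra_simps)
qed

lemma linear: "[G x = x * G 1] (mod m)"
proof -
  have x_mod: "int (nat (x mod m)) = x mod m"
    using modulus_pos by simp
  have "G x = G (x mod m)"
    by (intro periodic) (simp add: cong_def)
  also have "[G (x mod m) = (x mod m) * G 1] (mod m)"
    using linear_nat[of "nat (x mod m)"] unfolding x_mod .
  also have "[(x mod m) * G 1 = x * G 1] (mod m)"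
    by (intro cong_scalar_right) (simp add: cong_def)
  finally show ?thesis .
qed

lemma one_cong_zero: "[G 1 = 0] (mod m)"
proof -
  have "[a * G 1 = G a] (mod m)"
    by (rule cong_sym[OF linear])
  also have "[G a = (1 - a) * G 1] (mod m)"
    using scale_a[of 1] by simp
  finally have "[a * G 1 = (1 - a) * G 1] (mod m)" .
  then have "[(2 * a - 1) * G 1 = 0] (mod m)"
    by (simp add: cong_iff_dvd_diff algebra_simps)
  \<comment> \<open>the left-hand side below equals \<open>- G 1\<close>\<close>
  then have "[(2 * a - 1) * ((2 * a - 1) * G 1) - 2 * G 1 * (2 * a^2 - 2 * a + 1)
             = (2 * a - 1) * 0 - 2 * G 1 * 0] (mod m)"
    using quadratical by (intro cong_diff cong_mult cong_refl)
  then show ?thesis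
    by (simp add: algebra_simps power2_eq_square cong_iff_dvd_diff)
qed

end

lemma dual_iso_anti_affine:
  assumes "m > 0"
    and "[2 * a^2 - 2 * a + 1 = 0] (mod m)"
    and "groupoid_iso (zm m) (qop m a) (zm m) (dual_op (qop m a)) f"
  shows "anti_affine m a (\<lambda>x. f (x mod m) - f 0)"
proof
  fix x y
  have "x mod m \<in> zm m" "y mod m \<in> zm m"
    using assms(1) by (simp_all add: zm_def)
  then have "f ((a * x + (1 - a) * y) mod m) = qop m a (f (y mod m)) (f (x mod m))"
    using assms(3) unfolding groupoid_iso_def dual_op_def qop_mod_args[symmetric] by blast
  then have "[f ((a * x + (1 - a) * y) mod m) = (1 - a) * f (x mod m) + a * f (y mod m)] (mod m)"
    by (simp add: qop_def cong_def add.commute)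
  then have "[f ((a * x + (1 - a) * y) mod m) - f 0
      = (1 - a) * f (x mod m) + a * f (y mod m) - f 0] (mod m)"
    by (intro cong_diff cong_refl)
  also have "(1 - a) * f (x mod m) + a * f (y mod m) - f 0
      = (1 - a) * (f (x mod m) - f 0) + a * (f (y mod m) - f 0)"
    by (simp add: algebra_simps)
  finally show "[f ((a * x + (1 - a) * y) mod m) - f 0
      = (1 - a) * (f (x mod m) - f 0) + a * (f (y mod m) - f 0)] (mod m)" .
qed (use assms(1,2) in \<open>simp_all add: cong_def\<close>)

theorem corollary9p5:
  fixes m a :: int
  assumes "m > 1"
    and "a \<in> zm m"
    and "(2 * a^2 - 2 * a + 1) mod m = 0"
  shows "\<not> self_dual (zm m) (qop m a)"
proof
  assume "self_dual (zm m) (qop m a)"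
  then obtain f where iso: "groupoid_iso (zm m) (qop m a) (zm m) (dual_op (qop m a)) f"
    unfolding self_dual_def by blast
  have in_zm: "0 \<in> zm m" "1 \<in> zm m"
    using assms(1) by (auto simp: zm_def)
  interpret anti_affine m a "\<lambda>x. f (x mod m) - f 0"
    using assms(1,3) iso by (intro dual_iso_anti_affine) (simp_all add: cong_def)
  have "[f 1 = f 0] (mod m)"
    using one_cong_zero assms(1) by (simp add: cong_iff_dvd_diff)
  moreover have "f 0 \<in> zm m" "f 1 \<in> zm m"
    using iso in_zm unfolding groupoid_iso_def by (auto dest: bij_betw_apply)
  ultimately have "f 1 = f 0"
    by (auto simp: zm_def intro: cong_less_imp_eq_int)
  with iso in_zm show False
    unfolding groupoid_iso_def bij_betw_def inj_on_def by (metis zero_neq_one)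
qed

end
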